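(* Let $A>0$ and $C_2>0$ be such that $R:=(C_2/A)^{1/N}>1$. For $R_1>R$ set $C_1=C_2R_1^{sp}$ and define the radial function $$G(y)=\min\{A,\;C_2|y|^{-N},\;C_1|y|^{-(N+sp)}\},$$ so that $G=A$ for $|y|\le R$, $G=C_2|y|^{-N}$ for $R\le|y|\le R_1$ and $G=C_1|y|^{-(N+sp)}$ for $|y|\ge R_1$. Then there exists $R_*>R$ such that for every $R_1\ge R_*$ the inequality $$\mathcal L_{s,p}G(y)-\beta\,r^{1-N}\big(r^N G\big)'(r)\ge0,\qquad r=|y|,$$ holds for all $|y|\ge 2R_1$.
   Context: Fix $N\ge1$, $0<s<1$, $p>2$, $\Phi(z)=|z|^{p-2}z$, $\mathcal L_{s,p}u(x)=\mathrm{P.V.}\int_{\mathbb R^N}\Phi(u(x)-u(y))|x-y|^{-(N+sp)}dy$, and $\beta=1/(N(p-2)+sp)$. For a radial function $G(y)=G(r)$, $r^{1-N}(r^NG)'=\nabla\cdot(yG)$. *)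

theory Defs
  imports "HOL-Analysis.Analysis"
begin

definition Phi :: "real \<Rightarrow> real \<Rightarrow> real" where
  "Phi p z = \<bar>z\<bar> powr (p - 2) * z"

definition Lsp_trunc :: "real \<Rightarrow> real \<Rightarrow> (real^'n \<Rightarrow> real) \<Rightarrow> real^'n \<Rightarrow> real \<Rightarrow> real" where
  "Lsp_trunc s p u x eps =
     (LINT y : {y. dist x y \<ge> eps} | lebesgue.
        Phi p (u x - u y) * dist x y powr (- (real CARD('n) + s * p)))"

text \<open>The principal value integral L_{s,p} u (x) exists and equals L.\<close>
definition Lsp_has_value :: "real \<Rightarrow> real \<Rightarrow> (real^'n \<Rightarrow> real) \<Rightarrow> real^'n \<Rightarrow> real \<Rightarrow> bool" where
  "Lsp_has_value s p u x L \<longleftrightarrow>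
     (\<forall>eps>0. set_integrable lebesgue {y. dist x y \<ge> eps}
        (\<lambda>y. Phi p (u x - u y) * dist x y powr (- (real CARD('n) + s * p))))
     \<and> (Lsp_trunc s p u x \<longlongrightarrow> L) (at_right 0)"

definition Gprof :: "nat \<Rightarrow> real \<Rightarrow> real \<Rightarrow> real \<Rightarrow> real \<Rightarrow> real \<Rightarrow> real \<Rightarrow> real" where
  "Gprof N s p A C2 C1 r =
     (if r = 0 then A
      else min A (min (C2 * r powr (- real N)) (C1 * r powr (- (real N + s * p)))))"

end

theory Submission
  imports Defs
begin

text \<open>
  For \<open>|y| \<ge> R1\<close> the profile is the pure power \<open>G = C1 |y|^-(N+sp)\<close>, so the transport term
  \<open>\<beta> r^(1-N) (r^N G)'\<close> equals \<open>-\<beta> sp C1 |y|^-(N+sp)\<close>. Write \<open>L_{s,p} G(y)\<close> as the integral of the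
  kernel symmetrised in \<open>h \<mapsto> -h\<close>. On \<open>|h| < |y|/2\<close> the symmetrisation cancels the first-order
  variation of the power tail, and a second-order Taylor bound shows this part is
  \<open>O(C1^(p-1) |y|^(N-(N+sp)p))\<close>; on \<open>|h| \<ge> |y|/2\<close> the kernel is bounded below by
  \<open>-|y/2|^-(N+sp)\<close> times translates of an integrable majorant of \<open>G^(p-1)\<close> that does not depend on
  \<open>R1\<close>. Relative to \<open>C1 |y|^-(N+sp)\<close> both errors tend to zero as \<open>R1 \<rightarrow> \<infinity>\<close>, because
  \<open>C1 = C2 R1^sp\<close> grows; this yields \<open>R_*\<close>.
\<close>

section \<open>Integrals of radial power functions\<close>

lemma emeasure_density_powr_lessThan:
  fixes n V x :: real
  assumes n: "n > 0" and V: "V \<ge> 0" and x: "x > 0"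
  shows "emeasure (density lborel (\<lambda>t. ennreal (V * n * t powr (n - 1)) * indicator {0<..} t)) {..<x}
    = ennreal (V * x powr n)"
proof -
  have "emeasure (density lborel (\<lambda>t. ennreal (V * n * t powr (n - 1)) * indicator {0<..} t)) {..<x} =
      (\<integral>\<^sup>+t. ennreal (V * n * t powr (n - 1)) * indicator {0<..<x} t \<partial>lborel)"
    by (subst emeasure_density) (auto intro!: nn_integral_cong split: split_indicator)
  also have "\<dots> = ennreal (V * n * (x powr (n - 1 + 1) / (n - 1 + 1)))"
    using has_integral_powr_from_0[of "n - 1" x] n V x
    by (intro nn_integral_has_integral_lebesgue' has_integral_mult_right)
       (auto simp: has_integral_Icc_iff_Ioo[symmetric])
  finally show ?thesis
    using n by simp
qed

lemma distr_norm_lborel: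
  defines "N \<equiv> DIM('a::euclidean_space)"
  shows "distr lborel borel (norm :: 'a \<Rightarrow> real) =
    density lborel (\<lambda>t. ennreal (unit_ball_vol N * N * t powr (real N - 1)) * indicator {0<..} t)"
    (is "?D = density lborel ?f")
proof (rule measure_eqI_generator_eq[where E="range lessThan" and \<Omega>=UNIV and A="\<lambda>i. {..<real (Suc i)}"])
  let ?V = "unit_ball_vol N"
  have ball_eq: "emeasure ?D {..<x} = ennreal (?V * x powr N)" if "x > 0" for x
  proof -
    have "emeasure ?D {..<x} = emeasure lborel (ball (0::'a) x)"
      by (subst emeasure_distr) (auto intro!: arg_cong[where f="emeasure lborel"])
    then show ?thesis
      using that by (simp add: emeasure_ball N_def powr_realpow)
  qed
  have dens_eq: "emeasure (density lborel ?f) {..<x} = ennreal (?V * x powr N)" if "x > 0" for x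
    using emeasure_density_powr_lessThan[of N ?V x] that by (simp add: N_def)
  show "emeasure ?D X = emeasure (density lborel ?f) X" if "X \<in> range lessThan" for X
  proof -
    obtain x where X: "X = {..<x}" using \<open>X \<in> range lessThan\<close> by blast
    show ?thesis
    proof (cases "x > 0")
      case True
      then show ?thesis unfolding X using ball_eq dens_eq by simp
    next
      case False
      have "(norm :: 'a \<Rightarrow> real) -` {..<x} = {}"
        using False by (auto dest: order.strict_trans1[OF norm_ge_zero])
      then have "emeasure ?D {..<x} = 0"
        by (subst emeasure_distr) auto
      moreover have "emeasure (density lborel ?f) {..<x} = (\<integral>\<^sup>+t. ?f t * indicator {..<x} t \<partial>lborel)"
        by (rule emeasure_density) auto
      moreover have "?f t * indicator {..<x} t = 0" for t
        using False by (simp split: split_indicator)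
      ultimately show ?thesis unfolding X by simp
    qed
  qed
  show "emeasure ?D {..<real (Suc i)} \<noteq> \<infinity>" for i
    by (simp add: ball_eq)
  show "sets ?D = sigma_sets UNIV (range lessThan)" "sets (density lborel ?f) = sigma_sets UNIV (range lessThan)"
    by (simp_all add: borel_Iio)
  have "\<exists>i. t < real (Suc i)" for t :: real
  proof -
    obtain n :: nat where "t < n" using reals_Archimedean2 by blast
    then show ?thesis by (intro exI[of _ n]) simp
  qed
  then show "(\<Union>i. {..<real (Suc i)}) = UNIV" by auto
  have "{..<a} \<inter> {..<b} = {..<min a b}" for a b :: real
    by auto
  then show "Int_stable (range (lessThan :: real \<Rightarrow> real set))"
    by (auto simp: Int_stable_def)
qed auto

lemma nn_integral_radial:
  fixes f :: "real \<Rightarrow> ennreal"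
  assumes [measurable]: "f \<in> borel_measurable borel"
  defines "N \<equiv> DIM('a::euclidean_space)"
  shows "(\<integral>\<^sup>+h. f (norm (h::'a)) \<partial>lborel) =
    (\<integral>\<^sup>+t. ennreal (unit_ball_vol N * N * t powr (real N - 1)) * indicator {0<..} t * f t \<partial>lborel)"
proof -
  have "(\<integral>\<^sup>+h. f (norm (h::'a)) \<partial>lborel) = (\<integral>\<^sup>+t. f t \<partial>distr lborel borel (norm :: 'a \<Rightarrow> real))"
    by (simp add: nn_integral_distr)
  then show ?thesis
    unfolding distr_norm_lborel N_def by (simp add: nn_integral_density)
qed

lemma nn_integral_norm_powr:
  fixes \<gamma> :: real and I :: "real set"
  assumes [measurable]: "I \<in> sets borel"
  defines "N \<equiv> DIM('a::euclidean_space)"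
  shows "(\<integral>\<^sup>+h. ennreal (norm (h::'a) powr \<gamma>) * indicator I (norm h) \<partial>lborel) =
    (\<integral>\<^sup>+t. ennreal (unit_ball_vol N * N * t powr (\<gamma> + N - 1)) * indicator (I \<inter> {0<..}) t \<partial>lborel)"
proof -
  have "t powr (real N - 1) * t powr \<gamma> = t powr (\<gamma> + N - 1)" if "t > 0" for t :: real
    using that by (simp add: powr_add[symmetric] algebra_simps)
  then have "ennreal (unit_ball_vol N * N * t powr (real N - 1)) * indicator {0<..} t * (ennreal (t powr \<gamma>) * indicator I t)
      = ennreal (unit_ball_vol N * N * t powr (\<gamma> + N - 1)) * indicator (I \<inter> {0<..}) t" for t
    by (auto simp: ennreal_mult'[symmetric] mult.assoc split: split_indicator)
  then show ?thesis
    unfolding N_def by (subst nn_integral_radial) (auto simp: N_def)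
qed

lemma has_bochner_integral_norm_powr_ball:
  fixes \<gamma> \<rho> :: real
  defines "N \<equiv> DIM('a::euclidean_space)"
  assumes "\<gamma> > - real N" and "\<rho> > 0"
  shows "has_bochner_integral lborel (\<lambda>h::'a. norm h powr \<gamma> * indicator (ball 0 \<rho>) h)
    (unit_ball_vol N * N * (\<rho> powr (\<gamma> + N) / (\<gamma> + N)))"
proof (rule has_bochner_integral_nn_integral)
  have "(\<integral>\<^sup>+h. ennreal (norm (h::'a) powr \<gamma> * indicator (ball 0 \<rho>) h) \<partial>lborel)
      = (\<integral>\<^sup>+h. ennreal (norm (h::'a) powr \<gamma>) * indicator {..<\<rho>} (norm h) \<partial>lborel)"
    by (intro nn_integral_cong) (auto split: split_indicator)
  also have "\<dots> = (\<integral>\<^sup>+t. ennreal (unit_ball_vol N * N * t powr (\<gamma> + N - 1)) * indicator {0<..<\<rho>} t \<partial>lborel)"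
    by (subst nn_integral_norm_powr) (auto simp: N_def intro!: nn_integral_cong split: split_indicator)
  also have "\<dots> = ennreal (unit_ball_vol N * N * (\<rho> powr (\<gamma> + N - 1 + 1) / (\<gamma> + N - 1 + 1)))"
    using has_integral_powr_from_0[of "\<gamma> + N - 1" \<rho>] assms
    by (intro nn_integral_has_integral_lebesgue' has_integral_mult_right)
       (auto simp: has_integral_Icc_iff_Ioo[symmetric])
  finally show "(\<integral>\<^sup>+h. ennreal (norm (h::'a) powr \<gamma> * indicator (ball 0 \<rho>) h) \<partial>lborel)
      = ennreal (unit_ball_vol N * N * (\<rho> powr (\<gamma> + N) / (\<gamma> + N)))"
    by simp
qed (use assms in \<open>auto intro!: borel_measurable_times borel_measurable_indicator\<close>)

lemma has_bochner_integral_norm_powr_outside_ball: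
  fixes \<alpha> \<rho> :: real
  defines "N \<equiv> DIM('a::euclidean_space)"
  assumes "\<alpha> > real N" and "\<rho> > 0"
  shows "has_bochner_integral lborel (\<lambda>h::'a. norm h powr (-\<alpha>) * indicator {h. \<rho> \<le> norm h} h)
    (unit_ball_vol N * N * (\<rho> powr (N - \<alpha>) / (\<alpha> - N)))"
proof (rule has_bochner_integral_nn_integral)
  have "(\<integral>\<^sup>+h. ennreal (norm (h::'a) powr (-\<alpha>) * indicator {h. \<rho> \<le> norm h} h) \<partial>lborel)
      = (\<integral>\<^sup>+h. ennreal (norm (h::'a) powr (-\<alpha>)) * indicator {\<rho>..} (norm h) \<partial>lborel)"
    by (intro nn_integral_cong) (auto split: split_indicator)
  also have "\<dots> = (\<integral>\<^sup>+t. ennreal (unit_ball_vol N * N * t powr (-\<alpha> + N - 1)) * indicator {\<rho>..} t \<partial>lborel)"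
    using assms by (subst nn_integral_norm_powr) (auto simp: N_def intro!: nn_integral_cong split: split_indicator)
  also have "\<dots> = ennreal (unit_ball_vol N * N * (-(\<rho> powr (-\<alpha> + N - 1 + 1)) / (-\<alpha> + N - 1 + 1)))"
    using has_integral_powr_to_inf[of "-\<alpha> + N - 1" \<rho>] assms
    by (intro nn_integral_has_integral_lebesgue' has_integral_mult_right) auto
  finally show "(\<integral>\<^sup>+h. ennreal (norm (h::'a) powr (-\<alpha>) * indicator {h. \<rho> \<le> norm h} h) \<partial>lborel)
      = ennreal (unit_ball_vol N * N * (\<rho> powr (N - \<alpha>) / (\<alpha> - N)))"
    by (simp add: minus_divide_right)
qed (use assms in auto)

lemma integrable_norm_powr_outside_ball:
  fixes \<alpha> \<rho> :: real
  assumes "\<alpha> > real DIM('a::euclidean_space)" and "\<rho> > 0"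
  shows "integrable lborel (\<lambda>h::'a. norm h powr (- \<alpha>) * indicator {h. \<rho> \<le> norm h} h)"
  using has_bochner_integral_norm_powr_outside_ball[OF assms] by (rule integrable.intros)

lemma integrable_norm_powr_bounded:
  fixes f :: "'a::euclidean_space \<Rightarrow> real" and a B K \<gamma> \<alpha> :: real
  assumes [measurable]: "f \<in> borel_measurable borel"
    and a: "a > 0" and \<gamma>: "\<gamma> > - real DIM('a)" and \<alpha>: "\<alpha> > real DIM('a)"
    and near: "\<And>h. norm h \<le> a \<Longrightarrow> \<bar>f h\<bar> \<le> B * norm h powr \<gamma>"
    and far: "\<And>h. \<bar>f h\<bar> \<le> K * norm h powr (- \<alpha>)"
  shows "integrable lborel f"
proof (rule Bochner_Integration.integrable_bound)
  show "integrable lborel (\<lambda>h::'a. B * (norm h powr \<gamma> * indicator (ball 0 a) h)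
      + K * (norm h powr (- \<alpha>) * indicator {h. a \<le> norm h} h))"
    using has_bochner_integral_norm_powr_ball[OF \<gamma> a] a \<alpha>
    by (intro Bochner_Integration.integrable_add integrable_mult_right integrable.intros
        integrable_norm_powr_outside_ball) auto
  show "AE h in lborel. norm (f h) \<le> norm (B * (norm h powr \<gamma> * indicator (ball 0 a) h)
      + K * (norm h powr (- \<alpha>) * indicator {h. a \<le> norm h} h))"
    using near far by (intro AE_I2) (force simp: indicator_def intro: order.trans[OF _ abs_ge_self])
qed measurable

lemma tendsto_integral_outside_ball:
  fixes f :: "'a::euclidean_space \<Rightarrow> real" and a B \<gamma> :: real
  assumes f: "integrable lborel f" and a: "a > 0" and \<gamma>: "\<gamma> > - real DIM('a)"
    and near: "\<And>h. norm h \<le> a \<Longrightarrow> \<bar>f h\<bar> \<le> B * norm h powr \<gamma>"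
  shows "((\<lambda>eps. integral\<^sup>L lborel (\<lambda>h. indicator {h. eps \<le> norm h} h * f h)) \<longlongrightarrow> integral\<^sup>L lborel f) (at_right 0)"
proof -
  let ?N = "real DIM('a)"
  let ?ball = "\<lambda>\<rho>. unit_ball_vol ?N * ?N * (\<rho> powr (\<gamma> + ?N) / (\<gamma> + ?N))"
  have inner_ball: "\<bar>integral\<^sup>L lborel (\<lambda>h. indicator {h. eps \<le> norm h} h * f h) - integral\<^sup>L lborel f\<bar> \<le> B * ?ball eps"
    if eps: "0 < eps" "eps \<le> a" for eps
  proof -
    have ball: "has_bochner_integral lborel (\<lambda>h::'a. norm h powr \<gamma> * indicator (ball 0 eps) h) (?ball eps)"
      by (rule has_bochner_integral_norm_powr_ball[OF \<gamma> eps(1)])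
    have ball_integrable: "integrable lborel (\<lambda>h. indicator (ball 0 eps) h * f h)"
      using integrable_mult_indicator[of "ball 0 eps" lborel f] f by simp
    have "(\<lambda>h. indicator {h. eps \<le> norm h} h * f h) = (\<lambda>h. f h - indicator (ball 0 eps) h * f h)"
      by (auto simp: indicator_def fun_eq_iff)
    then have "\<bar>integral\<^sup>L lborel (\<lambda>h. indicator {h. eps \<le> norm h} h * f h) - integral\<^sup>L lborel f\<bar>
        = \<bar>integral\<^sup>L lborel (\<lambda>h. indicator (ball 0 eps) h * f h)\<bar>"
      using f ball_integrable by simp
    also have "\<dots> \<le> integral\<^sup>L lborel (\<lambda>h. norm (indicator (ball 0 eps) h * f h))"
      using integral_norm_bound[of lborel "\<lambda>h. indicator (ball 0 eps) h * f h"] by simp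
    also have "\<dots> \<le> integral\<^sup>L lborel (\<lambda>h::'a. B * (norm h powr \<gamma> * indicator (ball 0 eps) h))"
    proof (rule Bochner_Integration.integral_mono)
      show "norm (indicator (ball 0 eps) h * f h) \<le> B * (norm h powr \<gamma> * indicator (ball 0 eps) h)" for h
        using near[of h] eps by (auto simp: indicator_def)
    qed (use ball_integrable ball in \<open>auto intro: integrable.intros\<close>)
    also have "\<dots> = B * ?ball eps"
      using has_bochner_integral_integral_eq[OF ball] by simp
    finally show ?thesis .
  qed
  have "((\<lambda>eps. eps powr (\<gamma> + ?N)) \<longlongrightarrow> 0) (at_right 0)"
    using \<gamma> by (intro tendsto_zero_powrI[where b="\<gamma> + ?N"] tendsto_ident_at eventually_at_rightI[of 0 1]) auto
  then have bound_tendsto: "((\<lambda>eps. B * ?ball eps) \<longlongrightarrow> 0) (at_right 0)"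
    by (rule tendsto_mult_right_zero[OF tendsto_mult_right_zero[OF tendsto_divide_zero]])
  have "\<forall>\<^sub>F eps in at_right 0.
      norm (integral\<^sup>L lborel (\<lambda>h. indicator {h. eps \<le> norm h} h * f h) - integral\<^sup>L lborel f) \<le> B * ?ball eps"
    using inner_ball a by (intro eventually_at_rightI[of 0 a]) auto
  then show ?thesis
    by (rule LIM_zero_cancel[OF Lim_null_comparison[OF _ bound_tendsto]])
qed

lemma lborel_integral_translate_reflect:
  fixes y :: "'a::euclidean_space" and c :: real and f :: "'a \<Rightarrow> real"
  assumes c: "\<bar>c\<bar> = 1" and [measurable]: "f \<in> borel_measurable borel"
  shows "integrable lborel (\<lambda>x. f (y + c *\<^sub>R x)) \<longleftrightarrow> integrable lborel f"
    and "integral\<^sup>L lborel (\<lambda>x. f (y + c *\<^sub>R x)) = integral\<^sup>L lborel f"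
proof -
  have "c \<noteq> 0" using c by auto
  then have lborel: "distr lborel borel (\<lambda>x. y + c *\<^sub>R x) = lborel"
    using lborel_affine[of c y] c by (simp add: density_1)
  have T: "(\<lambda>x. y + c *\<^sub>R x) \<in> measurable lborel borel" by simp
  show "integrable lborel (\<lambda>x. f (y + c *\<^sub>R x)) \<longleftrightarrow> integrable lborel f"
    using integrable_distr_eq[OF T, of f] lborel by simp
  show "integral\<^sup>L lborel (\<lambda>x. f (y + c *\<^sub>R x)) = integral\<^sup>L lborel f"
    using integral_distr[OF T, of f] lborel by simp
qed

section \<open>The nonlinearity \<open>\<Phi>\<close>\<close>

lemma Phi_minus: "Phi p (- x) = - Phi p x"
  by (simp add: Phi_def)

lemma borel_measurable_Phi [measurable]: "Phi p \<in> borel_measurable borel"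
  unfolding Phi_def by measurable

lemma Phi_nonneg_eq: "x \<ge> 0 \<Longrightarrow> Phi p x = x powr (p - 1)"
  by (cases "x = 0") (simp_all add: Phi_def powr_diff field_simps power2_eq_square)

lemma abs_Phi: "\<bar>Phi p x\<bar> = \<bar>x\<bar> powr (p - 1)"
  using Phi_nonneg_eq[of "\<bar>x\<bar>" p] by (simp add: Phi_def abs_mult)

lemma has_real_derivative_Phi:
  assumes p: "p > 2"
  shows "(Phi p has_real_derivative (p - 1) * \<bar>x\<bar> powr (p - 2)) (at x)"
proof -
  consider "x > 0" | "x < 0" | "x = 0" by linarith
  then show ?thesis
  proof cases
    case 1
    have "((\<lambda>t. t powr (p - 1)) has_real_derivative (p - 1) * x powr (p - 1 - 1)) (at x)"
      using 1 by (intro has_real_derivative_powr) auto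
    then have "((\<lambda>t. t powr (p - 1)) has_real_derivative (p - 1) * \<bar>x\<bar> powr (p - 2)) (at x)"
      using 1 by (simp add: diff_diff_add)
    then show ?thesis
      by (rule has_field_derivative_transform_within_open[where S="{0<..}"])
         (use 1 in \<open>auto simp: Phi_nonneg_eq\<close>)
  next
    case 2
    have "((\<lambda>t. t powr (p - 1)) has_real_derivative (p - 1) * (- x) powr (p - 1 - 1)) (at (- x))"
      using 2 by (intro has_real_derivative_powr) auto
    then have "((\<lambda>t. (- t) powr (p - 1)) has_real_derivative (p - 1) * (- x) powr (p - 1 - 1) * (- 1)) (at x)"
      by (rule DERIV_chain2) (rule derivative_eq_intros refl)+
    then have d: "((\<lambda>t. - ((- t) powr (p - 1))) has_real_derivative (p - 1) * \<bar>x\<bar> powr (p - 2)) (at x)"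
      using 2 DERIV_minus by (fastforce simp: diff_diff_add)
    have eq: "- ((- t) powr (p - 1)) = Phi p t" if "t \<in> {..<0}" for t
      using that Phi_minus[of p "- t"] Phi_nonneg_eq[of "- t" p] by simp
    show ?thesis
      using has_field_derivative_transform_within_open[OF d, where S="{..<0}"] eq 2 by simp
  next
    case 3
    have "((\<lambda>h. \<bar>h\<bar> powr (p - 2)) \<longlongrightarrow> 0) (at 0)"
      using p by (intro tendsto_zero_powrI[where b="p - 2"] tendsto_rabs_zero tendsto_ident_at) auto
    moreover have "\<forall>\<^sub>F h in at 0. \<bar>h\<bar> powr (p - 2) = (Phi p h - Phi p 0) / (h - 0)"
      by (rule eventually_mono[OF eventually_neq_at_within[of 0]]) (simp add: Phi_def)
    ultimately show ?thesis
      using 3 p by (simp add: has_field_derivative_iff Lim_transform_eventually)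
  qed
qed

lemma mono_Phi: "p > 2 \<Longrightarrow> mono (Phi p)"
  by (rule monoI, rule DERIV_nonneg_imp_nondecreasing) (auto intro: has_real_derivative_Phi)

lemma Phi_lipschitz:
  assumes p: "p > 2"
  shows "\<bar>Phi p a - Phi p b\<bar> \<le> (p - 1) * max \<bar>a\<bar> \<bar>b\<bar> powr (p - 2) * \<bar>a - b\<bar>"
proof -
  let ?S = "{min a b..max a b}"
  have "norm (Phi p a - Phi p b) \<le> (p - 1) * max \<bar>a\<bar> \<bar>b\<bar> powr (p - 2) * norm (a - b)"
  proof (rule field_differentiable_bound[where S="?S"])
    fix z assume z: "z \<in> ?S"
    show "(Phi p has_real_derivative (p - 1) * \<bar>z\<bar> powr (p - 2)) (at z within ?S)"
      using has_real_derivative_Phi[OF p] by (rule has_field_derivative_at_within)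
    have "\<bar>z\<bar> \<le> max \<bar>a\<bar> \<bar>b\<bar>"
      using z by auto
    then show "norm ((p - 1) * \<bar>z\<bar> powr (p - 2)) \<le> (p - 1) * max \<bar>a\<bar> \<bar>b\<bar> powr (p - 2)"
      using p by (auto intro!: mult_left_mono powr_mono2)
  qed auto
  then show ?thesis by simp
qed

lemma Phi_add_bound:
  assumes p: "p > 2" and u: "\<bar>u\<bar> \<le> m" and v: "\<bar>v\<bar> \<le> m"
  shows "\<bar>Phi p u + Phi p v\<bar> \<le> (p - 1) * m powr (p - 2) * \<bar>u + v\<bar>"
proof -
  have "\<bar>Phi p u + Phi p v\<bar> \<le> (p - 1) * max \<bar>u\<bar> \<bar>v\<bar> powr (p - 2) * \<bar>u + v\<bar>"
    using Phi_lipschitz[OF p, of u "- v"] by (simp add: Phi_minus)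
  also have "\<dots> \<le> (p - 1) * m powr (p - 2) * \<bar>u + v\<bar>"
    using p u v by (intro mult_right_mono mult_left_mono powr_mono2) auto
  finally show ?thesis .
qed

lemma Phi_difference_lower_bound:
  assumes p: "p > 2" and a: "0 \<le> a" and b: "0 \<le> b" and H: "b powr (p - 1) \<le> H"
    and d: "0 \<le> d" "d \<le> D"
  shows "- H * D \<le> Phi p (a - b) * d"
proof -
  have "- H \<le> Phi p (- b)"
    using H Phi_nonneg_eq[OF b, of p] by (simp add: Phi_minus)
  also have "\<dots> \<le> Phi p (a - b)"
    using monoD[OF mono_Phi[OF p], of "- b" "a - b"] a by simp
  finally have lower: "- H \<le> Phi p (a - b)" .
  have "H \<ge> 0"
    using H powr_ge_zero[of b "p - 1"] by linarith
  then have "- H * D \<le> - H * d"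
    using d by (simp add: mult_left_mono)
  also have "\<dots> \<le> Phi p (a - b) * d"
    using mult_right_mono[OF lower d(1)] .
  finally show ?thesis .
qed

section \<open>Differences of negative powers\<close>

lemma second_order_remainder_bound:
  fixes f f' f'' :: "real \<Rightarrow> real"
  assumes S: "convex S"
    and f: "\<And>z. z \<in> S \<Longrightarrow> (f has_real_derivative f' z) (at z)"
    and f': "\<And>z. z \<in> S \<Longrightarrow> (f' has_real_derivative f'' z) (at z)"
    and M: "\<And>z. z \<in> S \<Longrightarrow> \<bar>f'' z\<bar> \<le> M"
    and t: "t \<in> S" and r: "r \<in> S"
  shows "\<bar>f t - f r - f' r * (t - r)\<bar> \<le> M * (t - r)\<^sup>2"
proof -
  let ?T = "{min t r..max t r}"
  have T: "?T \<subseteq> S"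
    using convex_contains_segment[THEN iffD1, OF S, rule_format, OF t r]
    by (auto simp: closed_segment_eq_real_ivl split: if_splits)
  have f'_lip: "\<bar>f' z - f' r\<bar> \<le> M * \<bar>z - r\<bar>" if "z \<in> S" for z
  proof -
    have "norm (f' z - f' r) \<le> M * norm (z - r)"
      by (rule field_differentiable_bound[OF S]) (use f' M that r in \<open>auto intro: has_field_derivative_at_within\<close>)
    then show ?thesis by simp
  qed
  let ?g = "\<lambda>x. f x - f' r * x"
  have "norm (?g t - ?g r) \<le> M * \<bar>t - r\<bar> * norm (t - r)"
  proof (rule field_differentiable_bound[where S="?T"])
    fix z assume z: "z \<in> ?T"
    with T have zS: "z \<in> S" by auto
    then show "(?g has_real_derivative f' z - f' r) (at z within ?T)"
      by (auto intro!: derivative_eq_intros f[THEN has_field_derivative_at_within])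
    have "\<bar>z - r\<bar> \<le> \<bar>t - r\<bar>"
      using z by auto
    then show "norm (f' z - f' r) \<le> M * \<bar>t - r\<bar>"
      using f'_lip[OF zS] M[OF zS] by (smt (verit) real_norm_def mult_left_mono)
  qed auto
  then show ?thesis
    by (simp add: algebra_simps power2_eq_square)
qed

lemma powr_neg_lipschitz:
  fixes q a t r :: real
  assumes q: "q > 0" and a: "a > 0" and t: "a \<le> t" and r: "a \<le> r"
  shows "\<bar>t powr (- q) - r powr (- q)\<bar> \<le> q * a powr (- q - 1) * \<bar>t - r\<bar>"
proof -
  have "norm (t powr (- q) - r powr (- q)) \<le> q * a powr (- q - 1) * norm (t - r)"
  proof (rule field_differentiable_bound[where S="{a..}"])
    fix z assume z: "z \<in> {a..}"
    show "((\<lambda>x. x powr (- q)) has_real_derivative - q * z powr (- q - 1)) (at z within {a..})"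
      using z a by (intro has_field_derivative_at_within[OF has_real_derivative_powr]) auto
    show "norm (- q * z powr (- q - 1)) \<le> q * a powr (- q - 1)"
      using z a q by (auto simp: abs_mult intro!: mult_left_mono powr_mono2')
  qed (use t r in auto)
  then show ?thesis by simp
qed

lemma powr_neg_second_order:
  fixes q a t r :: real
  assumes q: "q > 0" and a: "a > 0" and t: "a \<le> t" and r: "a \<le> r"
  shows "\<bar>t powr (- q) - r powr (- q) + q * r powr (- q - 1) * (t - r)\<bar>
    \<le> q * (q + 1) * a powr (- q - 2) * (t - r)\<^sup>2"
proof -
  have "\<bar>t powr (- q) - r powr (- q) - (- q * r powr (- q - 1)) * (t - r)\<bar>
      \<le> q * (q + 1) * a powr (- q - 2) * (t - r)\<^sup>2"
  proof (rule second_order_remainder_bound[where S="{a..}"])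
    fix z :: real assume z: "z \<in> {a..}"
    then have z0: "z > 0" using a by simp
    show "((\<lambda>x. x powr (- q)) has_real_derivative - q * z powr (- q - 1)) (at z)"
      using z0 by (auto intro!: derivative_eq_intros)
    show "((\<lambda>x. - q * x powr (- q - 1)) has_real_derivative q * (q + 1) * z powr (- q - 2)) (at z)"
      using z0 by (auto intro!: derivative_eq_intros simp: algebra_simps)
    show "\<bar>q * (q + 1) * z powr (- q - 2)\<bar> \<le> q * (q + 1) * a powr (- q - 2)"
      using z a q by (auto simp: abs_mult intro!: mult_left_mono powr_mono2')
  qed (use t r in auto)
  then show ?thesis by simp
qed

lemma norm_add_norm_diff_ge:
  fixes y h :: "'a::real_normed_vector"
  shows "2 * norm y \<le> norm (y + h) + norm (y - h)"
  using norm_triangle_ineq[of "y + h" "y - h"] by (simp add: scaleR_2[symmetric])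

lemma norm_add_norm_diff_le:
  fixes y h :: "'a::real_inner"
  assumes "y \<noteq> 0"
  shows "norm (y + h) + norm (y - h) \<le> 2 * norm y + (norm h)\<^sup>2 / norm y"
proof (rule power2_le_imp_le)
  have "(norm (y + h) + norm (y - h))\<^sup>2 \<le> 2 * ((norm (y + h))\<^sup>2 + (norm (y - h))\<^sup>2)"
    using sum_squares_bound[of "norm (y + h)" "norm (y - h)"] by (simp add: power2_sum algebra_simps)
  also have "\<dots> = 4 * (norm y)\<^sup>2 + 4 * (norm h)\<^sup>2"
    by (simp add: power2_norm_eq_inner inner_add_left inner_add_right inner_diff_left
        inner_diff_right inner_commute)
  also have "\<dots> \<le> 4 * (norm y)\<^sup>2 + 4 * (norm h)\<^sup>2 + ((norm h)\<^sup>2 / norm y)\<^sup>2"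
    by simp
  also have "\<dots> = (2 * norm y + (norm h)\<^sup>2 / norm y)\<^sup>2"
    using assms by (simp add: power2_sum field_simps power2_eq_square)
  finally show "(norm (y + h) + norm (y - h))\<^sup>2 \<le> (2 * norm y + (norm h)\<^sup>2 / norm y)\<^sup>2" .
qed (use assms in simp)

lemma norm_powr_first_difference:
  fixes y k :: "'a::real_normed_vector" and q a :: real
  assumes q: "q > 0" and a: "a > 0" and ya: "a \<le> norm y" and yk: "a \<le> norm (y + k)"
  shows "\<bar>norm (y + k) powr (- q) - norm y powr (- q)\<bar> \<le> q * a powr (- q - 1) * norm k"
proof -
  have "\<bar>norm (y + k) - norm y\<bar> \<le> norm k"
    using norm_triangle_ineq3[of "y + k" y] by simp
  moreover have "q * a powr (- q - 1) \<ge> 0"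
    using q by simp
  ultimately show ?thesis
    using powr_neg_lipschitz[OF q a yk ya] by (smt (verit) mult_left_mono)
qed

lemma norm_powr_second_difference:
  fixes y h :: "'a::real_inner" and q a :: real
  assumes q: "q > 0" and a: "a > 0"
    and ya: "a \<le> norm y" and hp: "a \<le> norm (y + h)" and hm: "a \<le> norm (y - h)"
  shows "\<bar>norm (y + h) powr (- q) + norm (y - h) powr (- q) - 2 * norm y powr (- q)\<bar>
    \<le> 3 * (q * (q + 1) * a powr (- q - 2)) * (norm h)\<^sup>2"
proof -
  define M where "M = q * (q + 1) * a powr (- q - 2)"
  define r where "r = norm y"
  have M0: "M \<ge> 0" unfolding M_def using q by simp
  have remainder: "\<bar>t powr (- q) - r powr (- q) + q * r powr (- q - 1) * (t - r)\<bar> \<le> M * (norm h)\<^sup>2"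
    if "a \<le> t" "\<bar>t - r\<bar> \<le> norm h" for t
  proof -
    have "(t - r)\<^sup>2 \<le> (norm h)\<^sup>2"
      using that(2) by (metis abs_ge_zero power2_abs power_mono)
    then show ?thesis
      using powr_neg_second_order[OF q a that(1) ya[folded r_def]] M0
      unfolding M_def by (smt (verit) mult_left_mono)
  qed
  have ep: "\<bar>norm (y + h) powr (- q) - r powr (- q) + q * r powr (- q - 1) * (norm (y + h) - r)\<bar> \<le> M * (norm h)\<^sup>2"
    using remainder[OF hp] norm_triangle_ineq3[of "y + h" y] unfolding r_def by simp
  have em: "\<bar>norm (y - h) powr (- q) - r powr (- q) + q * r powr (- q - 1) * (norm (y - h) - r)\<bar> \<le> M * (norm h)\<^sup>2"
    using remainder[OF hm] norm_triangle_ineq3[of "y - h" y] unfolding r_def by simp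
  have r0: "r > 0" "y \<noteq> 0" using a ya unfolding r_def by auto
  define d where "d = norm (y + h) + norm (y - h) - 2 * r"
  have "0 \<le> d" "d \<le> (norm h)\<^sup>2 / r"
    using norm_add_norm_diff_ge[of y h] norm_add_norm_diff_le[OF r0(2), of h] unfolding d_def r_def by auto
  moreover have "r powr (- q - 2) = r powr (- q - 1) / r"
    using r0 powr_diff[of r "- q - 1" 1] by (simp add: diff_diff_add)
  ultimately have "0 \<le> q * r powr (- q - 1) * d" "q * r powr (- q - 1) * d \<le> q * r powr (- q - 2) * (norm h)\<^sup>2"
    using q mult_left_mono[of d "(norm h)\<^sup>2 / r" "q * r powr (- q - 1)"] by auto
  moreover have "q * r powr (- q - 2) \<le> M"
  proof -
    have "r powr (- q - 2) \<le> a powr (- q - 2)"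
      using q a ya unfolding r_def by (intro powr_mono2') auto
    also have "\<dots> \<le> (q + 1) * a powr (- q - 2)"
      using q mult_right_mono[of 1 "q + 1" "a powr (- q - 2)"] by simp
    finally show ?thesis
      unfolding M_def using q by (simp add: mult.assoc)
  qed
  ultimately have "\<bar>q * r powr (- q - 1) * d\<bar> \<le> M * (norm h)\<^sup>2"
    by (smt (verit) mult_right_mono zero_le_power2)
  then show ?thesis
    using ep em unfolding M_def[symmetric] r_def[symmetric] d_def by (simp add: algebra_simps)
qed

section \<open>The principal value as a symmetrised integral\<close>

lemma Lsp_trunc_symmetrized:
  fixes u :: "real^'n \<Rightarrow> real" and y :: "real^'n" and s p K eps :: real
  defines "q \<equiv> real CARD('n) + s * p"
  defines "F \<equiv> \<lambda>z. Phi p (u y - u z) * dist y z powr (- q)"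
  assumes [measurable]: "u \<in> borel_measurable borel" and sp: "s * p > 0"
    and K: "\<And>z. \<bar>Phi p (u y - u z)\<bar> \<le> K" and eps: "eps > 0"
  shows "set_integrable lebesgue {z. eps \<le> dist y z} F"
    and "Lsp_trunc s p u y eps =
      integral\<^sup>L lborel (\<lambda>h. indicator {h. eps \<le> norm h} h * ((F (y + h) + F (y - h)) / 2))"
proof -
  have [measurable]: "F \<in> borel_measurable borel"
    unfolding F_def by measurable
  have [measurable]: "{h::real^'n. eps \<le> norm h} \<in> sets borel"
    by measurable
  define Fe where "Fe = (\<lambda>z. indicator {z. eps \<le> dist y z} z * F z)"
  have [measurable]: "Fe \<in> borel_measurable borel"
    unfolding Fe_def by measurable
  have Fe_shift: "Fe (y + c *\<^sub>R h) = indicator {h. eps \<le> norm h} h * F (y + c *\<^sub>R h)"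
    if "\<bar>c\<bar> = 1" for c h
    using that by (simp add: Fe_def dist_norm indicator_def)
  have shift_integrable: "integrable lborel (\<lambda>h. indicator {h. eps \<le> norm h} h * F (y + c *\<^sub>R h))"
    if "\<bar>c\<bar> = 1" for c
  proof (rule Bochner_Integration.integrable_bound)
    show "integrable lborel (\<lambda>h::real^'n. K * (norm h powr (- q) * indicator {h. eps \<le> norm h} h))"
      using sp eps unfolding q_def by (intro integrable_mult_right integrable_norm_powr_outside_ball) auto
    show "AE h in lborel. norm (indicator {h. eps \<le> norm h} h * F (y + c *\<^sub>R h))
        \<le> norm (K * (norm h powr (- q) * indicator {h. eps \<le> norm h} h))"
      using K[of "y + c *\<^sub>R h" for h] that
      by (intro AE_I2) (auto simp: F_def dist_norm abs_mult indicator_def intro!: mult_right_mono order.trans[OF _ abs_ge_self])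
  qed measurable
  have Fe_integrable: "integrable lborel Fe"
    using shift_integrable[of 1] lborel_integral_translate_reflect(1)[of 1 Fe y] Fe_shift[of 1] by simp
  have Fe_integral: "integral\<^sup>L lborel Fe = integral\<^sup>L lborel (\<lambda>h. indicator {h. eps \<le> norm h} h * F (y + c *\<^sub>R h))"
    if "\<bar>c\<bar> = 1" for c
    using lborel_integral_translate_reflect(2)[OF that, of Fe y] Fe_shift[OF that] by simp
  have "integral\<^sup>L lborel Fe =
      (integral\<^sup>L lborel (\<lambda>h. indicator {h. eps \<le> norm h} h * F (y + h))
     + integral\<^sup>L lborel (\<lambda>h. indicator {h. eps \<le> norm h} h * F (y - h))) / 2"
    using Fe_integral[of 1] Fe_integral[of "- 1"] by simp
  also have "\<dots> = integral\<^sup>L lborel (\<lambda>h. indicator {h. eps \<le> norm h} h * ((F (y + h) + F (y - h)) / 2))"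
    using shift_integrable[of 1] shift_integrable[of "- 1"] by (simp add: algebra_simps)
  finally have Fe_symmetric: "integral\<^sup>L lborel Fe = \<dots>" .
  have set_Fe: "(\<lambda>z. indicator {z. eps \<le> dist y z} z *\<^sub>R F z) = Fe"
    by (simp add: Fe_def)
  show "set_integrable lebesgue {z. eps \<le> dist y z} F"
    unfolding set_integrable_def set_Fe using Fe_integrable by (rule integrable_completion[THEN iffD2, rotated]) simp
  show "Lsp_trunc s p u y eps = integral\<^sup>L lborel (\<lambda>h. indicator {h. eps \<le> norm h} h * ((F (y + h) + F (y - h)) / 2))"
    unfolding Lsp_trunc_def set_lebesgue_integral_def F_def[symmetric, unfolded q_def] set_Fe
    using integral_completion[of Fe lborel] Fe_symmetric by simp
qed

lemma Lsp_has_value_symmetrized: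
  fixes u :: "real^'n \<Rightarrow> real" and y :: "real^'n" and s p K a B \<gamma> :: real
  defines "q \<equiv> real CARD('n) + s * p"
  defines "F \<equiv> \<lambda>z. Phi p (u y - u z) * dist y z powr (- q)"
  defines "S \<equiv> \<lambda>h. (F (y + h) + F (y - h)) / 2"
  assumes [measurable]: "u \<in> borel_measurable borel" and sp: "s * p > 0"
    and K: "\<And>z. \<bar>Phi p (u y - u z)\<bar> \<le> K"
    and a: "a > 0" and \<gamma>: "\<gamma> > - real CARD('n)"
    and near: "\<And>h. norm h \<le> a \<Longrightarrow> \<bar>S h\<bar> \<le> B * norm h powr \<gamma>"
  shows "integrable lborel S" and "Lsp_has_value s p u y (integral\<^sup>L lborel S)"
proof -
  have far: "\<bar>S h\<bar> \<le> K * norm h powr (- q)" for h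
  proof -
    have "\<bar>F (y + c *\<^sub>R h)\<bar> \<le> K * norm h powr (- q)" if "\<bar>c\<bar> = 1" for c
      using K[of "y + c *\<^sub>R h"] that by (simp add: F_def dist_norm abs_mult mult_right_mono)
    from this[of 1] this[of "- 1"] show ?thesis
      unfolding S_def by simp
  qed
  have [measurable]: "S \<in> borel_measurable borel"
    unfolding S_def F_def by measurable
  show S_integrable: "integrable lborel S"
    using sp \<gamma> by (intro integrable_norm_powr_bounded[OF _ a _ _ near far]) (auto simp: q_def)
  have "(S_trunc \<longlongrightarrow> integral\<^sup>L lborel S) (at_right 0)"
    if "S_trunc = (\<lambda>eps. integral\<^sup>L lborel (\<lambda>h. indicator {h. eps \<le> norm h} h * S h))" for S_trunc
    unfolding that using tendsto_integral_outside_ball[OF S_integrable a _ near] \<gamma> by simp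
  moreover have "\<forall>\<^sub>F eps in at_right 0.
      integral\<^sup>L lborel (\<lambda>h. indicator {h. eps \<le> norm h} h * S h) = Lsp_trunc s p u y eps"
    unfolding S_def F_def q_def
    by (intro eventually_at_rightI[of 0 1] Lsp_trunc_symmetrized(2)[symmetric]) (use sp K in auto)
  ultimately have "(Lsp_trunc s p u y \<longlongrightarrow> integral\<^sup>L lborel S) (at_right 0)"
    using Lim_transform_eventually by blast
  moreover have "set_integrable lebesgue {z. eps \<le> dist y z}
      (\<lambda>z. Phi p (u y - u z) * dist y z powr (- (real CARD('n) + s * p)))" if "eps > 0" for eps
    using Lsp_trunc_symmetrized(1)[of u s p y K eps, OF _ sp K that] by simp
  ultimately show "Lsp_has_value s p u y (integral\<^sup>L lborel S)"
    unfolding Lsp_has_value_def by blast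
qed

lemma symmetrized_kernel_near_bound:
  fixes y h :: "'a::real_inner" and g :: "real \<Rightarrow> real"
  assumes p: "p > 2" and q: "q > 0" and C1: "C1 \<ge> 0" and a: "a > 0"
    and y: "norm y = 2 * a" and h: "norm h \<le> a"
    and g_tail: "\<And>t. a \<le> t \<Longrightarrow> g t = C1 * t powr (- q)"
  defines "F \<equiv> \<lambda>z. Phi p (g (norm y) - g (norm z)) * dist y z powr (- q)"
  defines "L \<equiv> q * a powr (- q - 1)" and "M \<equiv> q * (q + 1) * a powr (- q - 2)"
  shows "\<bar>(F (y + h) + F (y - h)) / 2\<bar> \<le>
    (p - 1) / 2 * (C1 * L) powr (p - 2) * (3 * C1 * M) * norm h powr (p - q)"
proof (cases "h = 0")
  case True
  then show ?thesis by (simp add: F_def)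
next
  case False
  have ha: "a \<le> norm (y + h)" "a \<le> norm (y - h)" "a \<le> norm y"
    using norm_triangle_ineq2[of y "- h"] norm_triangle_ineq2[of y h] y h a by auto
  define u where "u = g (norm (y + h)) - g (norm y)"
  define v where "v = g (norm (y - h)) - g (norm y)"
  have u: "u = C1 * (norm (y + h) powr (- q) - norm y powr (- q))"
    and v: "v = C1 * (norm (y - h) powr (- q) - norm y powr (- q))"
    unfolding u_def v_def using g_tail ha by (simp_all add: algebra_simps)
  have "F (y + k) = - Phi p (g (norm (y + k)) - g (norm y)) * norm k powr (- q)" for k
    using Phi_minus[of p "g (norm (y + k)) - g (norm y)"] by (simp add: F_def dist_norm)
  from this[of h] this[of "- h"]
  have F: "(F (y + h) + F (y - h)) / 2 = - ((Phi p u + Phi p v) / 2 * norm h powr (- q))"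
    unfolding u_def v_def by (simp add: algebra_simps)
  have "\<bar>u\<bar> \<le> C1 * L * norm h" "\<bar>v\<bar> \<le> C1 * L * norm h"
    using norm_powr_first_difference[OF q a ha(3), of h] norm_powr_first_difference[OF q a ha(3), of "- h"]
      ha C1 unfolding u v L_def by (auto simp: abs_mult mult.assoc intro: mult_left_mono)
  then have Phi_sum: "\<bar>Phi p u + Phi p v\<bar> \<le> (p - 1) * (C1 * L * norm h) powr (p - 2) * \<bar>u + v\<bar>"
    by (rule Phi_add_bound[OF p])
  have "\<bar>u + v\<bar> = C1 * \<bar>norm (y + h) powr (- q) + norm (y - h) powr (- q) - 2 * norm y powr (- q)\<bar>"
  proof -
    have "u + v = C1 * (norm (y + h) powr (- q) + norm (y - h) powr (- q) - 2 * norm y powr (- q))"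
      unfolding u v by (simp add: algebra_simps)
    then show ?thesis using C1 by (simp add: abs_mult)
  qed
  also have "\<dots> \<le> C1 * (3 * M * (norm h)\<^sup>2)"
    using norm_powr_second_difference[OF q a ha(3,1,2)] C1 unfolding M_def by (intro mult_left_mono) auto
  finally have "\<bar>u + v\<bar> \<le> 3 * C1 * M * (norm h)\<^sup>2"
    by simp
  with Phi_sum have "\<bar>Phi p u + Phi p v\<bar> \<le> (p - 1) * (C1 * L * norm h) powr (p - 2) * (3 * C1 * M * (norm h)\<^sup>2)"
    using p by (smt (verit) mult_left_mono powr_ge_zero mult_nonneg_nonneg)
  then have Phi_uv: "\<bar>Phi p u + Phi p v\<bar> \<le> (p - 1) * (C1 * L) powr (p - 2) * (3 * C1 * M) * (norm h powr (p - 2) * (norm h)\<^sup>2)"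
    using C1 q a unfolding L_def by (simp add: powr_mult mult_ac)
  have "norm h powr (p - 2) * norm h powr 2 * norm h powr (- q) = norm h powr (p - q)"
    by (simp only: powr_add[symmetric]) simp
  then have powers: "norm h powr (p - 2) * (norm h)\<^sup>2 * norm h powr (- q) = norm h powr (p - q)"
    using False by (simp add: powr_realpow)
  have "\<bar>(F (y + h) + F (y - h)) / 2\<bar> = \<bar>Phi p u + Phi p v\<bar> / 2 * norm h powr (- q)"
    by (simp add: F abs_mult)
  also have "\<dots> \<le> (p - 1) * (C1 * L) powr (p - 2) * (3 * C1 * M) * (norm h powr (p - 2) * (norm h)\<^sup>2) / 2 * norm h powr (- q)"
    using Phi_uv by (intro mult_right_mono divide_right_mono) auto
  also have "\<dots> = (p - 1) / 2 * (C1 * L) powr (p - 2) * (3 * C1 * M) * norm h powr (p - q)"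
    by (simp only: powers[symmetric]) (simp add: field_simps)
  finally show ?thesis .
qed

section \<open>The profile \<open>G\<close>\<close>

lemma Gprof_nonneg: "0 \<le> A \<Longrightarrow> 0 \<le> C2 \<Longrightarrow> 0 \<le> C1 \<Longrightarrow> 0 \<le> Gprof N s p A C2 C1 t"
  by (simp add: Gprof_def)

lemma Gprof_le: "Gprof N s p A C2 C1 t \<le> A" "t \<noteq> 0 \<Longrightarrow> Gprof N s p A C2 C1 t \<le> C2 * t powr (- real N)"
  by (simp_all add: Gprof_def)

lemma borel_measurable_Gprof [measurable]: "Gprof N s p A C2 C1 \<in> borel_measurable borel"
  unfolding Gprof_def by measurable

lemma Gprof_eq_tail:
  assumes R1: "R1 > 0" and C2: "C2 > 0" and sp: "s * p > 0"
    and core: "C2 * R1 powr (- real N) \<le> A" and t: "R1 \<le> t"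
  shows "Gprof N s p A C2 (C2 * R1 powr (s * p)) t = C2 * R1 powr (s * p) * t powr (- (real N + s * p))"
proof -
  have t0: "t > 0" using R1 t by simp
  have "C2 * R1 powr (s * p) * t powr (- (real N + s * p)) \<le> C2 * t powr (s * p) * t powr (- (real N + s * p))"
    using R1 t sp C2 by (intro mult_right_mono mult_left_mono powr_mono2) auto
  also have "\<dots> = C2 * t powr (- real N)"
    using t0 by (simp add: mult.assoc powr_add[symmetric])
  finally have "C2 * R1 powr (s * p) * t powr (- (real N + s * p)) \<le> C2 * t powr (- real N)" .
  moreover have "C2 * t powr (- real N) \<le> A"
  proof -
    have "t powr (- real N) \<le> R1 powr (- real N)"
      using R1 t by (intro powr_mono2') auto
    then show ?thesis
      using core C2 by (smt (verit) mult_left_mono)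
  qed
  ultimately show ?thesis
    using t0 by (simp add: Gprof_def)
qed

text \<open>The majorant bounds \<open>G^(p-1)\<close> uniformly in \<open>C1\<close>, hence in \<open>R1\<close>; this is why the far-field
  error is \<open>o(C1)\<close>.\<close>

definition Gprof_majorant :: "nat \<Rightarrow> real \<Rightarrow> real \<Rightarrow> real \<Rightarrow> 'a::real_normed_vector \<Rightarrow> real" where
  "Gprof_majorant N p A C2 z =
    (if norm z < 1 then A powr (p - 1) else C2 powr (p - 1) * norm z powr (- (real N * (p - 1))))"

lemma borel_measurable_Gprof_majorant [measurable]: "Gprof_majorant N p A C2 \<in> borel_measurable borel"
  unfolding Gprof_majorant_def by measurable

lemma Gprof_majorant_nonneg: "0 \<le> Gprof_majorant N p A C2 z"
  by (simp add: Gprof_majorant_def)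

lemma Gprof_powr_le_majorant:
  assumes p: "p > 1" and A: "A \<ge> 0" and C2: "C2 \<ge> 0" and C1: "C1 \<ge> 0"
  shows "Gprof N s p A C2 C1 (norm z) powr (p - 1) \<le> Gprof_majorant N p A C2 z"
proof -
  let ?g = "Gprof N s p A C2 C1 (norm z)"
  have g0: "0 \<le> ?g" using A C2 C1 by (rule Gprof_nonneg)
  show ?thesis
  proof (cases "norm z < 1")
    case True
    then show ?thesis
      using p g0 Gprof_le(1)[of N s p A C2 C1 "norm z"] by (auto simp: Gprof_majorant_def intro: powr_mono2)
  next
    case False
    then have "?g \<le> C2 * norm z powr (- real N)"
      by (intro Gprof_le(2)) auto
    then have "?g powr (p - 1) \<le> (C2 * norm z powr (- real N)) powr (p - 1)"
      using p g0 by (intro powr_mono2) auto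
    also have "\<dots> = C2 powr (p - 1) * norm z powr (- (real N * (p - 1)))"
      using C2 by (simp add: powr_mult powr_powr)
    finally show ?thesis
      using False by (simp add: Gprof_majorant_def)
  qed
qed

lemma integrable_Gprof_majorant:
  assumes p: "p > 2"
  shows "integrable lborel (Gprof_majorant DIM('a::euclidean_space) p A C2 :: 'a \<Rightarrow> real)"
proof -
  let ?N = "DIM('a)"
  have "real ?N * 1 < real ?N * (p - 1)"
    using p by (intro mult_strict_left_mono) auto
  then have "integrable lborel (\<lambda>h::'a. A powr (p - 1) * indicator (ball 0 1) h
      + C2 powr (p - 1) * (norm h powr (- (real ?N * (p - 1))) * indicator {h. 1 \<le> norm h} h))"
    by (intro Bochner_Integration.integrable_add integrable_mult_right integrable_real_indicator
        integrable_norm_powr_outside_ball) (use emeasure_lborel_ball_finite[of "0::'a" 1] in auto)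
  also have "(\<lambda>h::'a. A powr (p - 1) * indicator (ball 0 1) h
      + C2 powr (p - 1) * (norm h powr (- (real ?N * (p - 1))) * indicator {h. 1 \<le> norm h} h))
      = Gprof_majorant ?N p A C2"
    by (auto simp: Gprof_majorant_def indicator_def fun_eq_iff)
  finally show ?thesis .
qed

lemma Gprof_symmetrized_lower_bound:
  fixes y h :: "real^'n" and s p A C2 C1 a B :: real
  defines "N \<equiv> CARD('n)"
  defines "q \<equiv> real N + s * p"
  defines "g \<equiv> Gprof N s p A C2 C1"
  defines "F \<equiv> \<lambda>z. Phi p (g (norm y) - g (norm z)) * dist y z powr (- q)"
  defines "H \<equiv> Gprof_majorant N p A C2 :: real^'n \<Rightarrow> real"
  assumes p: "p > 2" and A: "A \<ge> 0" and C2: "C2 \<ge> 0" and C1: "C1 \<ge> 0"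
    and a: "a > 0" and q: "q > 0"
    and near: "norm h \<le> a \<Longrightarrow> \<bar>(F (y + h) + F (y - h)) / 2\<bar> \<le> B * norm h powr (p - q)"
  shows "- B * (norm h powr (p - q) * indicator (ball 0 a) h) - (H (y + h) + H (y - h)) / 2 * a powr (- q)
    \<le> (F (y + h) + F (y - h)) / 2"
proof (cases "norm h < a")
  case True
  then show ?thesis
    using near Gprof_majorant_nonneg[of N p A C2 "y + h"] Gprof_majorant_nonneg[of N p A C2 "y - h"]
    unfolding H_def by (simp add: indicator_def) (smt (verit) zero_le_mult_iff powr_ge_zero)
next
  case False
  have "- H (y + c *\<^sub>R h) * a powr (- q) \<le> F (y + c *\<^sub>R h)" if "\<bar>c\<bar> = 1" for c
  proof -
    have "norm h powr (- q) \<le> a powr (- q)"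
      using False a q by (intro powr_mono2') auto
    then show ?thesis
      unfolding F_def dist_norm H_def g_def using that
      by (intro Phi_difference_lower_bound Gprof_nonneg Gprof_powr_le_majorant) (use p A C2 C1 in auto)
  qed
  from this[of 1] this[of "- 1"] show ?thesis
    using False by (simp add: indicator_def field_simps)
qed

lemma Lsp_Gprof_lower_bound:
  fixes y :: "real^'n" and s p A C2 R1 :: real
  defines "N \<equiv> CARD('n)"
  defines "q \<equiv> real N + s * p"
  defines "C1 \<equiv> C2 * R1 powr (s * p)"
  defines "a \<equiv> norm y / 2"
  defines "B \<equiv> (p - 1) / 2 * (C1 * (q * a powr (- q - 1))) powr (p - 2) * (3 * C1 * (q * (q + 1) * a powr (- q - 2)))"
  defines "I \<equiv> integral\<^sup>L lborel (Gprof_majorant N p A C2 :: real^'n \<Rightarrow> real)"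
  assumes s: "0 < s" "s < 1" and p: "p > 2" and A: "A > 0" and C2: "C2 > 0" and R1: "R1 > 0"
    and core: "C2 * R1 powr (- real N) \<le> A" and y: "2 * R1 \<le> norm y"
  shows "\<exists>L. Lsp_has_value s p (\<lambda>z. Gprof N s p A C2 C1 (norm z)) y L \<and>
    - B * (unit_ball_vol N * N * (a powr (p - q + N) / (p - q + N))) - a powr (- q) * I \<le> L"
proof -
  define g where "g = Gprof N s p A C2 C1"
  define F where "F = (\<lambda>z::real^'n. Phi p (g (norm y) - g (norm z)) * dist y z powr (- q))"
  define S where "S = (\<lambda>h. (F (y + h) + F (y - h)) / 2)"
  define H where "H = (Gprof_majorant N p A C2 :: real^'n \<Rightarrow> real)"
  have sp: "s * p > 0" using s p by simp
  have a: "a > 0" "R1 \<le> a" using y R1 unfolding a_def by auto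
  have q: "q > 0" using sp unfolding q_def by simp
  have C1: "C1 \<ge> 0" unfolding C1_def using C2 by simp
  have \<gamma>: "p - q > - real N" using s p unfolding q_def by (simp add: algebra_simps)
  have g_tail: "g t = C1 * t powr (- q)" if "a \<le> t" for t
    unfolding g_def C1_def q_def using Gprof_eq_tail[OF R1 C2 sp core] a that by simp
  have near: "\<bar>S h\<bar> \<le> B * norm h powr (p - q)" if "norm h \<le> a" for h
    unfolding S_def F_def B_def
    using symmetrized_kernel_near_bound[OF p q C1 a(1) _ that g_tail] a_def by simp
  have K: "\<bar>Phi p (g (norm y) - g (norm z))\<bar> \<le> A powr (p - 1)" for z
  proof -
    have "\<bar>g (norm y) - g (norm z)\<bar> \<le> A"
      using Gprof_nonneg[of A C2 C1] Gprof_le(1) A C1 C2 unfolding g_def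
      by (smt (verit) less_imp_le)
    then show ?thesis
      unfolding abs_Phi using p by (intro powr_mono2) auto
  qed
  have S_integrable: "integrable lborel S" and has_value: "Lsp_has_value s p (\<lambda>z. g (norm z)) y (integral\<^sup>L lborel S)"
    using Lsp_has_value_symmetrized[of "\<lambda>z. g (norm z)" s p y "A powr (p - 1)" a "p - q" B] sp K a(1) \<gamma> near
    unfolding S_def F_def q_def N_def g_def by auto
  define Low where "Low = (\<lambda>h::real^'n. - B * (norm h powr (p - q) * indicator (ball 0 a) h)
    - (H (y + h) + H (y - h)) / 2 * a powr (- q))"
  have H_shift: "integrable lborel (\<lambda>h. H (y + c *\<^sub>R h))" "integral\<^sup>L lborel (\<lambda>h. H (y + c *\<^sub>R h)) = I"
    if "\<bar>c\<bar> = 1" for c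
    using lborel_integral_translate_reflect[OF that, of H y] integrable_Gprof_majorant[OF p, where 'a="real^'n"]
    unfolding H_def I_def N_def by simp_all
  have ball: "has_bochner_integral lborel (\<lambda>h::real^'n. norm h powr (p - q) * indicator (ball 0 a) h)
      (unit_ball_vol N * N * (a powr (p - q + N) / (p - q + N)))"
    using has_bochner_integral_norm_powr_ball[of "p - q" a, where 'a="real^'n"] \<gamma> a unfolding N_def by simp
  have "integral\<^sup>L lborel Low = - B * (unit_ball_vol N * N * (a powr (p - q + N) / (p - q + N))) - a powr (- q) * I"
    using H_shift[of 1] H_shift[of "- 1"] has_bochner_integral_integral_eq[OF ball] integrable.intros[OF ball]
    unfolding Low_def by simp
  moreover have "integral\<^sup>L lborel Low \<le> integral\<^sup>L lborel S"
  proof (rule Bochner_Integration.integral_mono[OF _ S_integrable])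
    show "integrable lborel Low"
      unfolding Low_def using H_shift[of 1] H_shift[of "- 1"] integrable.intros[OF ball] by simp
    show "Low h \<le> S h" for h
      using Gprof_symmetrized_lower_bound[where y=y and h=h and B=B, OF p _ _ C1 a(1)] A C2 q near[of h]
      unfolding Low_def S_def F_def H_def g_def N_def q_def by simp
  qed
  ultimately show ?thesis
    using has_value unfolding g_def by auto
qed

lemma Gprof_transport_term:
  fixes s p A C2 R1 r :: real
  defines "C1 \<equiv> C2 * R1 powr (s * p)"
  assumes R1: "R1 > 0" and C2: "C2 > 0" and sp: "s * p > 0"
    and core: "C2 * R1 powr (- real N) \<le> A" and r: "R1 < r"
  shows "\<exists>D. ((\<lambda>t. t ^ N * Gprof N s p A C2 C1 t) has_real_derivative D) (at r)
    \<and> r powr (1 - real N) * D = - (s * p) * C1 * r powr (- (real N + s * p))"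
proof (intro exI conjI)
  have r0: "r > 0" using R1 r by simp
  show "((\<lambda>t. t ^ N * Gprof N s p A C2 C1 t) has_real_derivative C1 * (- (s * p) * r powr (- (s * p) - 1))) (at r)"
  proof (rule has_field_derivative_transform_within_open[where S="{R1<..}"])
    show "((\<lambda>t. C1 * t powr (- (s * p))) has_real_derivative C1 * (- (s * p) * r powr (- (s * p) - 1))) (at r)"
      using r0 by (intro DERIV_cmult has_real_derivative_powr) auto
    fix t assume "t \<in> {R1<..}"
    then have "t > 0" "Gprof N s p A C2 C1 t = C1 * t powr (- (real N + s * p))"
      unfolding C1_def using R1 Gprof_eq_tail[OF R1 C2 sp core] by auto
    then show "C1 * t powr (- (s * p)) = t ^ N * Gprof N s p A C2 C1 t"
      by (simp add: powr_realpow[symmetric] mult.left_commute powr_add[symmetric])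
  qed (use r in auto)
  show "r powr (1 - real N) * (C1 * (- (s * p) * r powr (- (s * p) - 1))) = - (s * p) * C1 * r powr (- (real N + s * p))"
    using r0 by (simp add: mult_ac powr_add[symmetric])
qed

section \<open>Choice of \<open>R_*\<close>\<close>

lemma near_field_constant_eq:
  fixes p q n V C1 a :: real
  assumes a: "a > 0" and C1: "C1 \<ge> 0" and q: "q \<ge> 0"
  shows "(p - 1) / 2 * (C1 * (q * a powr (- q - 1))) powr (p - 2) * (3 * C1 * (q * (q + 1) * a powr (- q - 2)))
      * (V * n * (a powr (p - q + n) / (p - q + n)))
    = C1 * a powr (- q) * ((p - 1) / 2 * q powr (p - 2) * (3 * q * (q + 1)) * (V * n / (p - q + n))
      * C1 powr (p - 2) * a powr (n - q * (p - 1)))"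
proof -
  have split: "(C1 * (q * a powr (- q - 1))) powr (p - 2) = C1 powr (p - 2) * q powr (p - 2) * a powr ((- q - 1) * (p - 2))"
    using C1 q a by (simp add: powr_mult powr_powr)
  have exponents: "a powr ((- q - 1) * (p - 2)) * a powr (- q - 2) * a powr (p - q + n) = a powr (- q) * a powr (n - q * (p - 1))"
    by (simp only: powr_add[symmetric]) (simp add: algebra_simps)
  have "(p - 1) / 2 * (C1 * (q * a powr (- q - 1))) powr (p - 2) * (3 * C1 * (q * (q + 1) * a powr (- q - 2)))
      * (V * n * (a powr (p - q + n) / (p - q + n)))
    = (p - 1) / 2 * q powr (p - 2) * (3 * q * (q + 1)) * (V * n / (p - q + n)) * C1 powr (p - 2) * C1
      * (a powr ((- q - 1) * (p - 2)) * a powr (- q - 2) * a powr (p - q + n))"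
    unfolding split by (simp add: mult_ac)
  also have "\<dots> = C1 * a powr (- q) * ((p - 1) / 2 * q powr (p - 2) * (3 * q * (q + 1)) * (V * n / (p - q + n))
      * C1 powr (p - 2) * a powr (n - q * (p - 1)))"
    unfolding exponents by (simp add: mult_ac)
  finally show ?thesis .
qed

lemma nonlocal_error_eventually_small:
  fixes K I C2 \<sigma> e c p :: real
  assumes K: "K \<ge> 0" and I: "I \<ge> 0" and C2: "C2 > 0" and \<sigma>: "\<sigma> > 0"
    and p: "p \<ge> 2" and e: "\<sigma> * (p - 2) < e" and c: "c > 0"
  shows "\<forall>\<^sub>F R1 in at_top. \<forall>a \<ge> R1.
    K * (C2 * R1 powr \<sigma>) powr (p - 2) * a powr (- e) + I / (C2 * R1 powr \<sigma>) \<le> c"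
proof -
  define f where "f R1 = K * C2 powr (p - 2) * R1 powr (\<sigma> * (p - 2) - e) + I / C2 * R1 powr (- \<sigma>)" for R1
  have "((\<lambda>R1. R1 powr (\<sigma> * (p - 2) - e)) \<longlongrightarrow> 0) at_top" "((\<lambda>R1. R1 powr (- \<sigma>)) \<longlongrightarrow> 0) at_top"
    using e \<sigma> by (auto intro!: tendsto_neg_powr filterlim_ident)
  then have "(f \<longlongrightarrow> 0) at_top"
    unfolding f_def by (rule tendsto_add_zero[OF tendsto_mult_right_zero tendsto_mult_right_zero])
  then have "\<forall>\<^sub>F R1 in at_top. f R1 < c"
    using c by (rule order_tendstoD)
  then show ?thesis
  proof (rule eventually_mono[OF eventually_conj[OF _ eventually_gt_at_top[of 0]]], safe)
    fix R1 a :: real assume f: "f R1 < c" and R1: "0 < R1" and a: "R1 \<le> a"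
    have "e > 0"
      using e \<sigma> p by (smt (verit) mult_nonneg_nonneg)
    have "(C2 * R1 powr \<sigma>) powr (p - 2) * a powr (- e) \<le> C2 powr (p - 2) * R1 powr (\<sigma> * (p - 2)) * R1 powr (- e)"
      using C2 R1 a \<open>e > 0\<close> \<sigma> by (auto simp: powr_mult powr_powr intro!: mult_left_mono powr_mono2')
    also have "\<dots> = C2 powr (p - 2) * R1 powr (\<sigma> * (p - 2) - e)"
      by (simp add: mult.assoc powr_add[symmetric])
    finally have "K * (C2 * R1 powr \<sigma>) powr (p - 2) * a powr (- e) \<le> K * C2 powr (p - 2) * R1 powr (\<sigma> * (p - 2) - e)"
      using K by (simp add: mult.assoc mult_left_mono)
    moreover have "I / (C2 * R1 powr \<sigma>) = I / C2 * R1 powr (- \<sigma>)"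
      by (simp add: powr_minus divide_inverse)
    ultimately show "K * (C2 * R1 powr \<sigma>) powr (p - 2) * a powr (- e) + I / (C2 * R1 powr \<sigma>) \<le> c"
      using f unfolding f_def by linarith
  qed
qed

lemma Gprof_core_bound:
  fixes A C2 R1 :: real and N :: nat
  assumes A: "A > 0" and C2: "C2 > 0" and N: "N > 0" and R1: "(C2 / A) powr (1 / real N) \<le> R1"
  shows "C2 * R1 powr (- real N) \<le> A"
proof -
  let ?R = "(C2 / A) powr (1 / real N)"
  have "R1 powr (- real N) \<le> ?R powr (- real N)"
    using R1 A C2 by (intro powr_mono2') auto
  also have "\<dots> = A / C2"
    using A C2 N by (simp add: powr_powr powr_minus_divide)
  finally show ?thesis
    using C2 by (simp add: field_simps)
qed

lemma Lsp_Gprof_lower_bound_scaled: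
  fixes y :: "real^'n" and s p A C2 R1 c :: real
  defines "N \<equiv> CARD('n)"
  defines "q \<equiv> real N + s * p"
  defines "C1 \<equiv> C2 * R1 powr (s * p)"
  defines "a \<equiv> norm y / 2"
  defines "K \<equiv> (p - 1) / 2 * q powr (p - 2) * (3 * q * (q + 1)) * (unit_ball_vol N * N / (p - q + N))"
  defines "I \<equiv> integral\<^sup>L lborel (Gprof_majorant N p A C2 :: real^'n \<Rightarrow> real)"
  assumes s: "0 < s" "s < 1" and p: "p > 2" and A: "A > 0" and C2: "C2 > 0" and R1: "R1 > 0"
    and core: "C2 * R1 powr (- real N) \<le> A" and y: "2 * R1 \<le> norm y"
    and small: "K * C1 powr (p - 2) * a powr (N - q * (p - 1)) + I / C1 \<le> c"
  shows "\<exists>L. Lsp_has_value s p (\<lambda>z. Gprof N s p A C2 C1 (norm z)) y L \<and> - (C1 * a powr (- q)) * c \<le> L"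
proof -
  have a: "a > 0" using y R1 unfolding a_def by auto
  have C1: "C1 > 0" unfolding C1_def using C2 R1 by simp
  have q: "q > 0" unfolding q_def using s p by (simp add: add_nonneg_pos)
  obtain L where L: "Lsp_has_value s p (\<lambda>z. Gprof N s p A C2 C1 (norm z)) y L"
    and "- ((p - 1) / 2 * (C1 * (q * a powr (- q - 1))) powr (p - 2) * (3 * C1 * (q * (q + 1) * a powr (- q - 2)))
        * (unit_ball_vol N * N * (a powr (p - q + N) / (p - q + N)))) - a powr (- q) * I \<le> L"
    using Lsp_Gprof_lower_bound[OF s p A C2 R1 core[unfolded N_def] y]
    unfolding C1_def a_def q_def N_def I_def by auto
  also have "(p - 1) / 2 * (C1 * (q * a powr (- q - 1))) powr (p - 2) * (3 * C1 * (q * (q + 1) * a powr (- q - 2)))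
        * (unit_ball_vol N * N * (a powr (p - q + N) / (p - q + N)))
      = C1 * a powr (- q) * (K * C1 powr (p - 2) * a powr (N - q * (p - 1)))"
    unfolding K_def by (rule near_field_constant_eq[OF a less_imp_le[OF C1] less_imp_le[OF q]])
  moreover have "a powr (- q) * I = C1 * a powr (- q) * (I / C1)"
    using C1 by simp
  ultimately have "- (C1 * a powr (- q)) * (K * C1 powr (p - 2) * a powr (N - q * (p - 1)) + I / C1) \<le> L"
    by (simp add: distrib_left)
  moreover have "C1 * a powr (- q) * (K * C1 powr (p - 2) * a powr (N - q * (p - 1)) + I / C1) \<le> C1 * a powr (- q) * c"
    using small C1 by (intro mult_left_mono) auto
  ultimately show ?thesis
    using L by auto
qed

lemma Lsp_Gprof_ge_transport:
  fixes s p A C2 R :: real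
  defines "N \<equiv> CARD('n::finite)"
  defines "q \<equiv> real N + s * p"
  defines "\<beta> \<equiv> 1 / (real N * (p - 2) + s * p)"
  assumes s: "0 < s" "s < 1" and p: "p > 2" and A: "A > 0" and C2: "C2 > 0"
    and R: "R = (C2 / A) powr (1 / real N)"
  shows "\<exists>Rstar > R. \<forall>R1 \<ge> Rstar. \<forall>y :: real^'n. 2 * R1 \<le> norm y \<longrightarrow>
    (\<exists>L. Lsp_has_value s p (\<lambda>z. Gprof N s p A C2 (C2 * R1 powr (s * p)) (norm z)) y L
       \<and> - \<beta> * (s * p) * (C2 * R1 powr (s * p)) * norm y powr (- q) \<le> L)"
proof -
  define K where "K = (p - 1) / 2 * q powr (p - 2) * (3 * q * (q + 1)) * (unit_ball_vol N * N / (p - q + N))"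
  define I where "I = integral\<^sup>L lborel (Gprof_majorant N p A C2 :: real^'n \<Rightarrow> real)"
  define c where "c = \<beta> * (s * p) * 2 powr (- q)"
  have sp: "s * p > 0" using s p by simp
  have N: "N > 0" unfolding N_def by simp
  have "p - q + N > 0"
    using s p unfolding q_def by (simp add: algebra_simps)
  then have "K \<ge> 0"
    using p sp unfolding K_def q_def by simp
  moreover have "I \<ge> 0"
    unfolding I_def by (simp add: Gprof_majorant_nonneg)
  moreover have "c > 0"
    unfolding c_def \<beta>_def using sp p by (simp add: add_nonneg_pos)
  moreover have "s * p * (p - 2) < q * (p - 1) - N"
  proof -
    have "real N * 2 < real N * p"
      using N p by simp
    then show ?thesis
      unfolding q_def using sp by (simp add: algebra_simps)
  qed
  ultimately have "\<forall>\<^sub>F R1 in at_top. \<forall>a \<ge> R1.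
      K * (C2 * R1 powr (s * p)) powr (p - 2) * a powr (- (q * (p - 1) - N)) + I / (C2 * R1 powr (s * p)) \<le> c"
    using C2 sp p by (intro nonlocal_error_eventually_small) auto
  then obtain R0 where R0: "\<And>R1 a. R0 \<le> R1 \<Longrightarrow> R1 \<le> a \<Longrightarrow>
      K * (C2 * R1 powr (s * p)) powr (p - 2) * a powr (- (q * (p - 1) - N)) + I / (C2 * R1 powr (s * p)) \<le> c"
    unfolding eventually_at_top_linorder by blast
  show ?thesis
  proof (rule exI[of _ "max R0 (R + 1)"], intro conjI allI impI)
    fix R1 :: real and y :: "real^'n"
    assume R1: "max R0 (R + 1) \<le> R1" and y: "2 * R1 \<le> norm y"
    have R1_pos: "R1 > 0" using R1 R by (smt (verit) powr_ge_zero)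
    have core: "C2 * R1 powr (- real N) \<le> A"
      using Gprof_core_bound[OF A C2 N] R1 R by simp
    have "norm y powr (- q) = 2 powr (- q) * (norm y / 2) powr (- q)"
      by (simp add: powr_mult[symmetric])
    then show "\<exists>L. Lsp_has_value s p (\<lambda>z. Gprof N s p A C2 (C2 * R1 powr (s * p)) (norm z)) y L
       \<and> - \<beta> * (s * p) * (C2 * R1 powr (s * p)) * norm y powr (- q) \<le> L"
      using Lsp_Gprof_lower_bound_scaled[OF s p A C2 R1_pos core[unfolded N_def] y, of c] R0[of R1 "norm y / 2"] R1 y
      unfolding K_def I_def c_def q_def N_def by (auto simp: mult_ac)
  qed (use R in simp)
qed

theorem mainTheorem4:
  fixes s p A C2 R :: real
  defines "N \<equiv> CARD('n::finite)"
  defines "\<beta> \<equiv> 1 / (real N * (p - 2) + s * p)"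
  assumes s: "0 < s" "s < 1"
    and p: "p > 2"
    and A: "A > 0" and C2: "C2 > 0"
    and R_def: "R = (C2 / A) powr (1 / real N)"
    and R_gt: "R > 1"
  shows "\<exists>Rstar > R. \<forall>R1 \<ge> Rstar. \<forall>y :: real^'n.
           norm y \<ge> 2 * R1 \<longrightarrow>
           (let C1 = C2 * R1 powr (s * p);
                g = Gprof N s p A C2 C1;
                r = norm y
            in \<exists>L D. Lsp_has_value s p (\<lambda>z :: real^'n. g (norm z)) y L
                    \<and> ((\<lambda>t. t ^ N * g t) has_real_derivative D) (at r)
                    \<and> L - \<beta> * (r powr (1 - real N) * D) \<ge> 0)"
proof -
  obtain Rstar where "Rstar > R" and Rstar: "\<And>R1 y. Rstar \<le> R1 \<Longrightarrow> 2 * R1 \<le> norm (y :: real^'n) \<Longrightarrow>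
      \<exists>L. Lsp_has_value s p (\<lambda>z. Gprof N s p A C2 (C2 * R1 powr (s * p)) (norm z)) y L
        \<and> - \<beta> * (s * p) * (C2 * R1 powr (s * p)) * norm y powr (- (real N + s * p)) \<le> L"
    using Lsp_Gprof_ge_transport[OF s p A C2 R_def[unfolded N_def]] unfolding N_def \<beta>_def by blast
  show ?thesis
  proof (rule exI[of _ Rstar], intro conjI allI impI)
    fix R1 and y :: "real^'n"
    assume R1: "Rstar \<le> R1" and y: "2 * R1 \<le> norm y"
    have R1_pos: "R1 > 0" and R1_y: "R1 < norm y"
      using R1 \<open>Rstar > R\<close> R_gt y by auto
    have core: "C2 * R1 powr (- real N) \<le> A"
      using Gprof_core_bound[of A C2 N R1] A C2 R1 \<open>Rstar > R\<close> R_def unfolding N_def by simp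
    have sp: "s * p > 0"
      using s p by simp
    obtain D where deriv:
      "((\<lambda>t. t ^ N * Gprof N s p A C2 (C2 * R1 powr (s * p)) t) has_real_derivative D) (at (norm y))"
      and transport: "norm y powr (1 - real N) * D = - (s * p) * (C2 * R1 powr (s * p)) * norm y powr (- (real N + s * p))"
      using Gprof_transport_term[OF R1_pos C2 sp core R1_y] by blast
    obtain L where L: "Lsp_has_value s p (\<lambda>z. Gprof N s p A C2 (C2 * R1 powr (s * p)) (norm z)) y L"
      and bound: "- \<beta> * (s * p) * (C2 * R1 powr (s * p)) * norm y powr (- (real N + s * p)) \<le> L"
      using Rstar[OF R1 y] by blast
    have "L - \<beta> * (norm y powr (1 - real N) * D) \<ge> 0"
      using bound unfolding transport by (simp add: algebra_simps)
    then show "let C1 = C2 * R1 powr (s * p); g = Gprof N s p A C2 C1; r = norm y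
        in \<exists>L D. Lsp_has_value s p (\<lambda>z :: real^'n. g (norm z)) y L
          \<and> ((\<lambda>t. t ^ N * g t) has_real_derivative D) (at r) \<and> L - \<beta> * (r powr (1 - real N) * D) \<ge> 0"
      unfolding Let_def using L deriv by blast
  qed (rule \<open>Rstar > R\<close>)
qed

end
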